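(* Let $\xi$ be a highest $\ell_{\mathbf s}$-weight vector of highest $\ell_{\mathbf s}$-weight $\boldsymbol\lambda(u)=(\lambda_i(u))_{1\le i\le\kappa}$ in a representation of the super Yangian $\mathscr Y_{\mathbf s}$. Then for each $1\le i\le\kappa$, $$t'_{ii}(u)\,\xi=\lambda_i'(u)\,\xi,\qquad \lambda_i'(u)=\frac{1}{\lambda_{i}(u+\rho_{i+1})}\prod_{k=i+1}^{\kappa} \frac{\lambda_k(u+\rho_k)}{\lambda_{k}(u+\rho_{k+1})}.$$
   Context: Fix integers $m,n\ge 0$ and put $\kappa=m+n$. A parity sequence is $\mathbf s=(s_1,\dots,s_\kappa)\in\{\pm1\}^\kappa$ with exactly $m$ entries equal to $1$; write $|i|\in\mathbb Z_2$ with $s_i=(-1)^{|i|}$. Let $V=\mathbb C^{m|n}$ have basis $v_1,\dots,v_\kappa$ with $v_i$ of parity $|i|$, and let $E_{ij}\in\mathrm{End}(V)$ be the matrix units. The super Yangian $\mathscr Y_{\mathbf s}$ is the unital associative superalgebra generated by $t_{ij}^{(r)}$ ($1\le i,j\le\kappa$, $r\ge1$) of parity $|i|+|j|$ with defining relations $[t_{ij}(u),t_{kl}(v)]=\frac{(-1)^{|i||j|+|i||k|+|j||k|}}{u-v}\big(t_{kj}(u)t_{il}(v)-t_{kj}(v)t_{il}(u)\big)$ (supercommutator), where $t_{ij}(u)=\delta_{ij}+\sum_{r\ge1}t_{ij}^{(r)}u^{-r}$. Put $T(u)=\sum_{i,j}(-1)^{|i||j|+|j|}t_{ij}(u)\otimes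 E_{ij}$ and define the series $t'_{ij}(u)$ by $T(u)^{-1}=\sum_{i,j}(-1)^{|i||j|+|j|}t'_{ij}(u)\otimes E_{ij}$. A nonzero vector $\xi$ in a $\mathscr Y_{\mathbf s}$-module is a highest $\ell_{\mathbf s}$-weight vector of highest $\ell_{\mathbf s}$-weight $\boldsymbol\lambda(u)$ if $t_{ij}(u)\xi=0$ for $1\le i<j\le\kappa$ and $t_{ii}(u)\xi=\lambda_i(u)\xi$ with $\lambda_i(u)\in1+u^{-1}\mathbb C[[u^{-1}]]$. Put $\rho_k=\sum_{a=k}^\kappa s_a$ for $1\le k\le\kappa$, and $\rho_{\kappa+1}=0$. *)

theory Defs
  imports Complex_Main "HOL-Computational_Algebra.Formal_Power_Series"
begin

definition par :: "(nat \<Rightarrow> int) \<Rightarrow> nat \<Rightarrow> nat" where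
  "par s i = (if s i = 1 then 0 else 1)"

definition sgnv :: "nat \<Rightarrow> 'v::ab_group_add \<Rightarrow> 'v" where
  "sgnv e x = (if even e then x else - x)"

definition parity_seq :: "nat \<Rightarrow> nat \<Rightarrow> (nat \<Rightarrow> int) \<Rightarrow> bool" where
  "parity_seq m n s \<longleftrightarrow> (\<forall>i\<in>{1..m+n}. s i = 1 \<or> s i = -1) \<and>
     card {i\<in>{1..m+n}. s i = 1} = m"

definition tt :: "(nat \<Rightarrow> nat \<Rightarrow> nat \<Rightarrow> 'v \<Rightarrow> 'v) \<Rightarrow> nat \<Rightarrow> nat \<Rightarrow> nat \<Rightarrow> 'v::zero \<Rightarrow> 'v" where
  "tt t i j r v = (if r = 0 then (if i = j then v else 0) else t i j r v)"

text \<open>A representation of the super Yangian Y_s on a complex vector space (scale = scalar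
  multiplication): linear operators t i j r (1 \<le> i,j \<le> kappa, r \<ge> 1) satisfying the defining
  relations in coefficient form
  [t_ij^(r), t_kl^(s)] = (-1)^(|i||j|+|i||k|+|j||k|) *
     sum_{a=0}^{min(r,s)-1} (t_kj^(a) t_il^(r+s-1-a) - t_kj^(r+s-1-a) t_il^(a)),
  where [x,y] = xy - (-1)^((|i|+|j|)(|k|+|l|)) yx is the supercommutator.\<close>
definition yangian_rep ::
  "nat \<Rightarrow> (nat \<Rightarrow> int) \<Rightarrow> (complex \<Rightarrow> 'v::ab_group_add \<Rightarrow> 'v)
     \<Rightarrow> (nat \<Rightarrow> nat \<Rightarrow> nat \<Rightarrow> 'v \<Rightarrow> 'v) \<Rightarrow> bool" where
  "yangian_rep \<kappa> s scale t \<longleftrightarrow>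
     Vector_Spaces.vector_space scale \<and>
     (\<forall>i\<in>{1..\<kappa>}. \<forall>j\<in>{1..\<kappa>}. \<forall>r\<ge>1. Vector_Spaces.linear scale scale (t i j r)) \<and>
     (\<forall>i\<in>{1..\<kappa>}. \<forall>j\<in>{1..\<kappa>}. \<forall>k\<in>{1..\<kappa>}. \<forall>l\<in>{1..\<kappa>}. \<forall>r\<ge>1. \<forall>q\<ge>1. \<forall>v.
        t i j r (t k l q v)
          - sgnv ((par s i + par s j) * (par s k + par s l)) (t k l q (t i j r v))
        = sgnv (par s i * par s j + par s i * par s k + par s j * par s k)
            (\<Sum>a<min r q. tt t k j a (tt t i l (r + q - 1 - a) v)
                          - tt t k j (r + q - 1 - a) (tt t i l a v)))"

text \<open>Coefficients t'_il^(r) of the inverse matrix T(u)^{-1}.  With the sign conventions of the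
  paper (super tensor product), T(u) T(u)^{-1} = 1 amounts to
  sum_j t_ij(u) t'_jl(u) = delta_il, i.e. t'(u) is the ordinary inverse of the matrix (t_ij(u)).\<close>
fun tinv :: "nat \<Rightarrow> (nat \<Rightarrow> nat \<Rightarrow> nat \<Rightarrow> 'v \<Rightarrow> 'v) \<Rightarrow> nat \<Rightarrow> nat \<Rightarrow> nat \<Rightarrow> 'v::ab_group_add \<Rightarrow> 'v" where
  "tinv \<kappa> t i l 0 v = (if i = l then v else 0)"
| "tinv \<kappa> t i l (Suc r) v =
     - (\<Sum>j\<in>{1..\<kappa>}. \<Sum>p\<in>{1..Suc r}. t i j p (tinv \<kappa> t j l (Suc r - p) v))"

text \<open>Highest l_s-weight vector of highest weight lambda; lambda i is the series lambda_i(u)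
  viewed as a formal power series in u^{-1}.\<close>
definition highest_weight_vector ::
  "nat \<Rightarrow> (complex \<Rightarrow> 'v::ab_group_add \<Rightarrow> 'v) \<Rightarrow> (nat \<Rightarrow> nat \<Rightarrow> nat \<Rightarrow> 'v \<Rightarrow> 'v)
     \<Rightarrow> (nat \<Rightarrow> complex fps) \<Rightarrow> 'v \<Rightarrow> bool" where
  "highest_weight_vector \<kappa> scale t lam xi \<longleftrightarrow>
     xi \<noteq> 0 \<and>
     (\<forall>i\<in>{1..\<kappa>}. \<forall>j\<in>{1..\<kappa>}. i < j \<longrightarrow> (\<forall>r\<ge>1. t i j r xi = 0)) \<and>
     (\<forall>i\<in>{1..\<kappa>}. fps_nth (lam i) 0 = 1 \<and> (\<forall>r\<ge>1. t i i r xi = scale (fps_nth (lam i) r) xi))"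

text \<open>Shift: for f(u) = sum_r f_r u^{-r}, the series f(u+c) expanded in u^{-1};
  in the variable x = u^{-1} this is f(x/(1+cx)).\<close>
definition fps_shift_arg :: "complex \<Rightarrow> complex fps \<Rightarrow> complex fps" where
  "fps_shift_arg c f = f oo (fps_X * inverse (1 + fps_const c * fps_X))"

definition rho :: "nat \<Rightarrow> (nat \<Rightarrow> int) \<Rightarrow> nat \<Rightarrow> int" where
  "rho \<kappa> s k = (\<Sum>a\<in>{k..\<kappa>}. s a)"

end

(*
  For p <= kappa let T^(p)(u) be the leading p x p block of T(u); tinv p t computes the entries of
  its inverse.  We show t'^(p)_ii(u) xi = lambda^(p)_i(u) xi by induction on p >= i, where
  lambda^(p)_i is the weight of the theorem with kappa replaced by p.

  For p = i the i-th column of T^(i)(u)^-1 applied to xi is lambda_i(u)^-1 xi e_i, since the t_ai(u)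
  with a < i kill xi.  For the step to n = p + 1 put y_b(u) = t'^(p)_bi(u) xi, z_b(u) = y_b(u + s_n) and
      Y_b = lambda_n(u)^-1 t_nn(u + s_n) z_b  (b <= p),     Y_n = - lambda_n(u)^-1 sum_b t_nb(u + s_n) z_b.
  The defining relations at v = u + s_n, where u - v = -s_n cancels the sign (-1)^|n| = s_n, and the
  fact that all t_an(u) with a <= p kill the z_b show that T^(n)(u) Y = e_i xi.  The solution of this
  system is unique, so t'^(n)_ii(u) xi = Y_i = lambda_n(u)^-1 lambda^(p)_i(u + s_n) lambda_n(u + s_n) xi,
  which is the recursion satisfied by lambda^(n)_i.
*)

theory Submission
  imports Defs
begin

unbundle fps_syntax

lemma sum_atMost_if_add_eq:
  fixes q N M :: nat and F :: "nat \<Rightarrow> 'a::comm_monoid_add"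
  shows "(\<Sum>m\<le>M. if q + m = N then F m else 0) = (if q \<le> N \<and> N - q \<le> M then F (N - q) else 0)"
proof -
  have "(\<Sum>m\<le>M. if q + m = N then F m else 0) = (\<Sum>m\<le>M. if m = N - q then (if q \<le> N then F m else 0) else 0)"
    by (intro sum.cong) auto
  then show ?thesis
    by simp
qed

lemma sum_atMost_if_add_eq_left:
  fixes m N :: nat and F :: "nat \<Rightarrow> 'a::comm_monoid_add"
  assumes "m \<le> N"
  shows "(\<Sum>k\<le>N. if k + m = N then F k else 0) = F (N - m)"
  using sum_atMost_if_add_eq[where q = m and M = N and N = N and F = F] assms by (simp add: add.commute)

lemma sum_atMost_if_le:
  fixes N M :: nat and F :: "nat \<Rightarrow> 'a::comm_monoid_add"
  assumes "N \<le> M"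
  shows "(\<Sum>q\<le>M. if q \<le> N then F q else 0) = (\<Sum>q\<le>N. F q)"
proof -
  have "{q \<in> {..M}. q \<le> N} = {..N}"
    using assms by auto
  then show ?thesis
    by (simp flip: sum.inter_filter)
qed

lemma sum_rotate3:
  "(\<Sum>a\<in>A. \<Sum>b\<in>B. \<Sum>c\<in>C. f a b c) = (\<Sum>b\<in>B. \<Sum>c\<in>C. \<Sum>a\<in>A. f a b c)"
  by (subst sum.swap) (simp only: sum.swap[of _ A])

lemma sum_atMost_Suc_shift_vanishing:
  fixes g :: "nat \<Rightarrow> 'a::comm_monoid_add"
  assumes "g 0 = 0" and "g (Suc N) = 0"
  shows "(\<Sum>r\<le>N. g (Suc r)) = (\<Sum>r\<le>N. g r)"
  using sum.atMost_Suc_shift[of g N] sum.atMost_Suc[of g N] assms by simp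

lemma sum_lessThan_min_Suc_diff:
  fixes h :: "nat \<Rightarrow> nat \<Rightarrow> 'a::ab_group_add"
  assumes antisym: "\<And>e f. h e f = - h f e" and diag: "\<And>e. h e e = 0"
  shows "(\<Sum>e<min (Suc r) q. h e (r + q - e)) - (\<Sum>e<min r (Suc q). h e (r + q - e)) = h r q"
proof -
  consider "r < q" | "r = q" | "q < r"
    by linarith
  then show ?thesis
  proof cases
    case 1
    then show ?thesis
      by (simp add: min_def)
  next
    case 2
    then show ?thesis
      by (simp add: diag)
  next
    case 3
    then have "min (Suc r) q = q" and "min r (Suc q) = Suc q"
      by simp_all
    then show ?thesis
      using antisym[of q r] by simp
  qed
qed

section \<open>Shifting the argument of a power series\<close>

definition shift_subst :: "'a::field \<Rightarrow> 'a fps" where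
  "shift_subst c = fps_X * inverse (1 + fps_const c * fps_X)"

lemma fps_shift_arg_conv_compose: "fps_shift_arg c f = f oo shift_subst c"
  by (simp add: fps_shift_arg_def shift_subst_def)

lemma shift_subst_nth_0 [simp]: "shift_subst c $ 0 = 0"
  by (simp add: shift_subst_def)

lemma shift_subst_zero: "shift_subst 0 = fps_X"
  by (simp add: shift_subst_def)

lemma shift_subst_mult_denominator: "shift_subst c * (1 + fps_const c * fps_X) = fps_X"
  by (simp add: shift_subst_def mult.assoc inverse_mult_eq_1)

lemma shift_subst_unique:
  assumes "g * (1 + fps_const c * fps_X) = fps_X"
  shows "g = shift_subst c"
proof -
  have "g = g * (1 + fps_const c * fps_X) * inverse (1 + fps_const c * fps_X)"
    by (simp add: mult.assoc inverse_mult_eq_1')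
  then show ?thesis
    by (simp add: assms shift_subst_def)
qed

lemma shift_subst_minus_X: "shift_subst c - fps_X = - (fps_const c * fps_X * shift_subst c)"
proof -
  have "shift_subst c - fps_X = shift_subst c - shift_subst c * (1 + fps_const c * fps_X)"
    by (simp only: shift_subst_mult_denominator)
  then show ?thesis
    by (simp add: algebra_simps)
qed

lemma shift_subst_compose: "shift_subst d oo shift_subst c = shift_subst (c + d)"
proof (rule shift_subst_unique)
  let ?g = "shift_subst d oo shift_subst c"
  have g: "?g * (1 + fps_const d * shift_subst c) = shift_subst c"
    using arg_cong[OF shift_subst_mult_denominator[of d], of "\<lambda>f. f oo shift_subst c"]
    by (simp add: fps_compose_mult_distrib fps_compose_add_distrib)
  have "1 + fps_const (c + d) * fps_X = 1 + fps_const c * fps_X + fps_const d * fps_X"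
    by (simp add: algebra_simps flip: fps_const_add)
  also have "\<dots> = 1 + fps_const c * fps_X + fps_const d * (shift_subst c * (1 + fps_const c * fps_X))"
    by (simp only: shift_subst_mult_denominator)
  also have "\<dots> = (1 + fps_const d * shift_subst c) * (1 + fps_const c * fps_X)"
    by (simp add: algebra_simps)
  finally show "?g * (1 + fps_const (c + d) * fps_X) = fps_X"
    by (simp add: g shift_subst_mult_denominator flip: mult.assoc)
qed

lemma power_shift_subst_nth_less: "n < q \<Longrightarrow> (shift_subst c ^ q) $ n = 0"
  by (simp add: shift_subst_def power_mult_distrib fps_X_power_mult_nth)

lemma fps_shift_arg_zero: "fps_shift_arg 0 f = f"
  by (simp add: fps_shift_arg_conv_compose shift_subst_zero)

lemma fps_shift_arg_nth_0 [simp]: "fps_shift_arg c f $ 0 = f $ 0"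
  by (simp add: fps_shift_arg_conv_compose)

lemma fps_shift_arg_mult: "fps_shift_arg c (f * g) = fps_shift_arg c f * fps_shift_arg c g"
  by (simp add: fps_shift_arg_conv_compose fps_compose_mult_distrib)

lemma fps_shift_arg_prod: "fps_shift_arg c (prod f S) = (\<Prod>k\<in>S. fps_shift_arg c (f k))"
  by (simp add: fps_shift_arg_conv_compose fps_compose_prod_distrib)

lemma fps_shift_arg_inverse:
  "f $ 0 \<noteq> 0 \<Longrightarrow> fps_shift_arg c (inverse f) = inverse (fps_shift_arg c f)"
  by (simp add: fps_shift_arg_conv_compose fps_inverse_compose)

lemma fps_shift_arg_shift_arg: "fps_shift_arg c (fps_shift_arg d f) = fps_shift_arg (c + d) f"
  by (simp add: fps_shift_arg_conv_compose fps_compose_assoc[symmetric] shift_subst_compose)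

lemma fps_mult_nth_box:
  assumes "N \<le> M"
  shows "(f * g) $ N = (\<Sum>a\<le>M. \<Sum>b\<le>M. if a + b = N then f $ a * g $ b else 0)"
proof -
  have "(\<Sum>a\<le>M. \<Sum>b\<le>M. if a + b = N then f $ a * g $ b else 0)
      = (\<Sum>a\<le>M. if a \<le> N then f $ a * g $ (N - a) else 0)"
    using assms by (intro sum.cong) (auto simp: sum_atMost_if_add_eq)
  then show ?thesis
    using assms by (simp add: sum_atMost_if_le fps_mult_nth atLeast0AtMost)
qed

section \<open>Series with coefficients in a vector space\<close>

locale complex_vector_space = vector_space scale for scale :: "complex \<Rightarrow> 'v::ab_group_add \<Rightarrow> 'v"
begin

sublocale vector_space_pair scale scale ..

text \<open>A series \<open>y :: nat \<Rightarrow> 'v\<close> stands for \<open>\<Sum>N. y N u^-N\<close> and an operator series \<open>A\<close> for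
  \<open>\<Sum>q. A q u^-q\<close>; \<open>series_apply A y\<close> is \<open>A(u) y(u)\<close> and \<open>shift_series c y\<close> is \<open>y(u + c)\<close>.\<close>

definition series_apply :: "(nat \<Rightarrow> 'v \<Rightarrow> 'v) \<Rightarrow> (nat \<Rightarrow> 'v) \<Rightarrow> nat \<Rightarrow> 'v" where
  "series_apply A y N = (\<Sum>q\<le>N. A q (y (N - q)))"

definition const_series :: "'v \<Rightarrow> nat \<Rightarrow> 'v" where
  "const_series x N = (if N = 0 then x else 0)"

definition scalar_op :: "complex fps \<Rightarrow> nat \<Rightarrow> 'v \<Rightarrow> 'v" where
  "scalar_op f q x = scale (f $ q) x"

definition shift_series :: "complex \<Rightarrow> (nat \<Rightarrow> 'v) \<Rightarrow> nat \<Rightarrow> 'v" where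
  "shift_series c y N = (\<Sum>m\<le>N. scale ((shift_subst c ^ m) $ N) (y m))"

definition shift_op :: "complex \<Rightarrow> (nat \<Rightarrow> 'v \<Rightarrow> 'v) \<Rightarrow> nat \<Rightarrow> 'v \<Rightarrow> 'v" where
  "shift_op c A N x = shift_series c (\<lambda>q. A q x) N"

lemma const_series_0 [simp]: "const_series 0 = (\<lambda>N. 0)"
  by (simp add: fun_eq_iff const_series_def)

lemma scale_minus_cancel: "c \<noteq> 0 \<Longrightarrow> scale (- c) x = scale c y \<Longrightarrow> - x = y"
  by (metis scale_left_imp_eq scale_minus_left scale_minus_right)

lemma series_apply_box:
  assumes "N \<le> M"
  shows "series_apply A y N = (\<Sum>q\<le>M. \<Sum>m\<le>M. if q + m = N then A q (y m) else 0)"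
proof -
  have "(\<Sum>q\<le>M. \<Sum>m\<le>M. if q + m = N then A q (y m) else 0)
      = (\<Sum>q\<le>M. if q \<le> N then A q (y (N - q)) else 0)"
    using assms by (intro sum.cong) (auto simp: sum_atMost_if_add_eq)
  then show ?thesis
    using assms by (simp add: series_apply_def sum_atMost_if_le)
qed

lemma series_apply_series_apply:
  assumes "\<And>q. Vector_Spaces.linear scale scale (A q)"
  shows "series_apply A (series_apply B y) N
    = (\<Sum>q1\<le>N. \<Sum>q2\<le>N. \<Sum>m\<le>N. if q1 + q2 + m = N then A q1 (B q2 (y m)) else 0)"
proof -
  have "(\<Sum>q2\<le>N. \<Sum>m\<le>N. if q1 + q2 + m = N then A q1 (B q2 (y m)) else 0)
      = A q1 (series_apply B y (N - q1))" if "q1 \<le> N" for q1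
  proof -
    have "(\<Sum>q2\<le>N. \<Sum>m\<le>N. if q1 + q2 + m = N then A q1 (B q2 (y m)) else 0)
        = (\<Sum>q2\<le>N. if q2 \<le> N - q1 then A q1 (B q2 (y (N - q1 - q2))) else 0)"
      using that by (intro sum.cong) (auto simp: sum_atMost_if_add_eq[where q = "q1 + q2" for q2])
    also have "\<dots> = A q1 (series_apply B y (N - q1))"
      by (simp add: sum_atMost_if_le series_apply_def linear_sum[OF assms])
    finally show ?thesis .
  qed
  then show ?thesis
    by (simp add: series_apply_def)
qed

lemma series_apply_sum:
  assumes "\<And>q. Vector_Spaces.linear scale scale (A q)"
  shows "series_apply A (\<lambda>N. \<Sum>b\<in>B. y b N) N = (\<Sum>b\<in>B. series_apply A (y b) N)"
  by (simp add: series_apply_def linear_sum[OF assms] sum.swap[of _ B])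

lemma series_apply_add:
  assumes "\<And>q. Vector_Spaces.linear scale scale (A q)"
  shows "series_apply A (\<lambda>N. y N + w N) N = series_apply A y N + series_apply A w N"
  by (simp add: series_apply_def linear_add[OF assms] sum.distrib)

lemma series_apply_neg:
  assumes "\<And>q. Vector_Spaces.linear scale scale (A q)"
  shows "series_apply A (\<lambda>N. - y N) N = - series_apply A y N"
  by (simp add: series_apply_def linear_neg[OF assms] sum_negf)

lemma series_apply_zero:
  assumes "\<And>q. Vector_Spaces.linear scale scale (A q)"
  shows "series_apply A (\<lambda>N. 0) = (\<lambda>N. 0)"
  by (simp add: fun_eq_iff series_apply_def linear_0[OF assms])

lemma series_apply_const_series:
  assumes "\<And>q. Vector_Spaces.linear scale scale (A q)"
  shows "series_apply A (const_series x) N = A N x"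
  by (simp add: series_apply_def const_series_def if_distrib[of "A _"] linear_0[OF assms]
      sum.delta' cong: if_cong)

lemma series_apply_commute:
  assumes "\<And>q. Vector_Spaces.linear scale scale (A q)" and "\<And>q. Vector_Spaces.linear scale scale (B q)"
    and "\<And>q1 q2 x. A q1 (B q2 x) = B q2 (A q1 x)"
  shows "series_apply A (series_apply B y) N = series_apply B (series_apply A y) N"
proof -
  have "(\<Sum>q1\<le>N. \<Sum>q2\<le>N. \<Sum>m\<le>N. if q1 + q2 + m = N then A q1 (B q2 (y m)) else 0)
      = (\<Sum>q2\<le>N. \<Sum>q1\<le>N. \<Sum>m\<le>N. if q2 + q1 + m = N then B q2 (A q1 (y m)) else 0)"
    by (subst sum.swap) (simp only: assms(3) add.commute)
  then show ?thesis
    by (simp add: series_apply_series_apply assms(1,2))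
qed

lemma linear_scalar_op: "Vector_Spaces.linear scale scale (scalar_op f q)"
  using linear_scale_self by (simp add: scalar_op_def[abs_def])

lemma series_apply_scalar_op_commute:
  assumes "\<And>q. Vector_Spaces.linear scale scale (A q)"
  shows "series_apply A (series_apply (scalar_op f) y) N = series_apply (scalar_op f) (series_apply A y) N"
  by (rule series_apply_commute) (simp_all add: assms linear_scalar_op scalar_op_def linear_scale[OF assms])

lemma series_apply_scalar_op_const_series:
  "series_apply (scalar_op f) (const_series x) N = scale (f $ N) x"
  by (simp add: series_apply_const_series linear_scalar_op scalar_op_def)

lemma series_apply_scalar_op_one: "series_apply (scalar_op 1) y N = y N"
  by (simp add: series_apply_def scalar_op_def if_distrib[of "\<lambda>c. scale c _"] sum.delta' cong: if_cong)

lemma series_apply_scalar_op_mult: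
  "series_apply (scalar_op f) (series_apply (scalar_op g) y) N = series_apply (scalar_op (f * g)) y N"
proof -
  have "series_apply (scalar_op (f * g)) y N
      = (\<Sum>k\<le>N. \<Sum>m\<le>N. if k + m = N then scale ((f * g) $ k) (y m) else 0)"
    by (simp add: series_apply_box[of N N] scalar_op_def cong: if_cong)
  also have "\<dots> = (\<Sum>m\<le>N. \<Sum>k\<le>N. if k + m = N then scale ((f * g) $ k) (y m) else 0)"
    by (rule sum.swap)
  also have "\<dots> = (\<Sum>m\<le>N. \<Sum>a\<le>N. \<Sum>b\<le>N. if a + b + m = N then scale (f $ a * g $ b) (y m) else 0)"
  proof (rule sum.cong[OF refl])
    fix m assume "m \<in> {..N}"
    then show "(\<Sum>k\<le>N. if k + m = N then scale ((f * g) $ k) (y m) else 0)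
        = (\<Sum>a\<le>N. \<Sum>b\<le>N. if a + b + m = N then scale (f $ a * g $ b) (y m) else 0)"
      by (auto simp: sum_atMost_if_add_eq_left fps_mult_nth_box[of "N - m" N] scale_sum_left
          if_distrib[of "\<lambda>c. scale c _"] intro!: sum.cong cong: if_cong)
  qed
  also have "\<dots> = (\<Sum>a\<le>N. \<Sum>b\<le>N. \<Sum>m\<le>N. if a + b + m = N then scale (f $ a * g $ b) (y m) else 0)"
    by (rule sum_rotate3)
  finally show ?thesis
    by (simp add: series_apply_series_apply linear_scalar_op scalar_op_def cong: if_cong)
qed

lemma shift_series_atMost:
  assumes "N \<le> M"
  shows "shift_series c y N = (\<Sum>m\<le>M. scale ((shift_subst c ^ m) $ N) (y m))"
  unfolding shift_series_def
  by (rule sum.mono_neutral_left) (use assms in \<open>auto simp: power_shift_subst_nth_less\<close>)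

lemma linear_shift_op:
  assumes "\<And>q. Vector_Spaces.linear scale scale (A q)"
  shows "Vector_Spaces.linear scale scale (shift_op c A N)"
  unfolding shift_op_def[abs_def] shift_series_def
  by (intro linear_compose_sum ballI linear_compose_scale_right assms)

lemma shift_series_sum: "shift_series c (\<lambda>N. \<Sum>b\<in>B. y b N) N = (\<Sum>b\<in>B. shift_series c (y b) N)"
  by (simp add: shift_series_def scale_sum_right sum.swap[of _ B])

lemma shift_series_const_series: "shift_series c (const_series x) N = const_series x N"
  by (simp add: shift_series_def const_series_def if_distrib[of "scale _"] sum.delta' cong: if_cong)

lemma shift_op_scalar_op: "shift_op c (scalar_op f) = scalar_op (fps_shift_arg c f)"
  by (simp add: fun_eq_iff shift_op_def shift_series_def scalar_op_def fps_shift_arg_conv_compose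
      fps_compose_nth atLeast0AtMost scale_sum_left mult.commute)

lemma shift_series_series_apply:
  assumes "\<And>q. Vector_Spaces.linear scale scale (A q)"
  shows "shift_series c (series_apply A y) N = series_apply (shift_op c A) (shift_series c y) N"
proof -
  let ?G = "\<lambda>k. shift_subst c ^ k"
  have "shift_series c (series_apply A y) N
      = (\<Sum>r\<le>N. \<Sum>q\<le>N. \<Sum>m\<le>N. if q + m = r then scale (?G r $ N) (A q (y m)) else 0)"
    by (auto simp: shift_series_def series_apply_box[of _ N] scale_sum_right
        if_distrib[of "scale _"] intro!: sum.cong cong: if_cong)
  also have "\<dots> = (\<Sum>q\<le>N. \<Sum>m\<le>N. \<Sum>r\<le>N. if r = q + m then scale (?G (q + m) $ N) (A q (y m)) else 0)"
    by (subst sum_rotate3) (auto intro!: sum.cong)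
  also have "\<dots> = (\<Sum>q\<le>N. \<Sum>m\<le>N. scale (?G (q + m) $ N) (A q (y m)))"
    by (auto simp: power_shift_subst_nth_less intro!: sum.cong)
  also have "\<dots> = (\<Sum>q\<le>N. \<Sum>m\<le>N. \<Sum>a\<le>N. scale (?G q $ a * ?G m $ (N - a)) (A q (y m)))"
    by (simp add: power_add fps_mult_nth atLeast0AtMost scale_sum_left)
  also have "\<dots> = (\<Sum>a\<le>N. \<Sum>q\<le>N. \<Sum>m\<le>N. scale (?G q $ a * ?G m $ (N - a)) (A q (y m)))"
    by (rule sum_rotate3[symmetric])
  also have "\<dots> = series_apply (shift_op c A) (shift_series c y) N"
    by (auto simp: series_apply_def shift_op_def shift_series_atMost[of _ N] linear_sum[OF assms]
        linear_scale[OF assms] scale_sum_right intro!: sum.cong)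
  finally show ?thesis .
qed

lemma shift_series_scalar_op:
  "shift_series c (series_apply (scalar_op f) y) N
    = series_apply (scalar_op (fps_shift_arg c f)) (shift_series c y) N"
  by (simp add: shift_series_series_apply linear_scalar_op shift_op_scalar_op)

end

section \<open>Products of series at \<open>u\<close> and \<open>u + c\<close>\<close>

text \<open>\<open>pair_coeff c r q m\<close> is \<open>u^-(r+m) (u + c)^-q\<close> expanded in powers of \<open>u^-1\<close>, so
  \<open>eval_shifted c F N\<close> is the coefficient of \<open>u^-N\<close> in \<open>\<Sum>r q m. F r q m u^-r (u + c)^-q u^-m\<close>,
  the form in which products \<open>A(u) B(u + c) z(u)\<close> expand.\<close>

definition pair_coeff :: "'a::field \<Rightarrow> nat \<Rightarrow> nat \<Rightarrow> nat \<Rightarrow> 'a fps" where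
  "pair_coeff c r q m = fps_X ^ (r + m) * shift_subst c ^ q"

lemma pair_coeff_nth_less: "N < r + q + m \<Longrightarrow> pair_coeff c r q m $ N = 0"
  by (simp add: pair_coeff_def fps_X_power_mult_nth power_shift_subst_nth_less)

lemma pair_coeff_recurrence:
  "pair_coeff c r (Suc q) m - pair_coeff c (Suc r) q m = - (fps_const c * pair_coeff c (Suc r) (Suc q) m)"
proof -
  have "pair_coeff c r (Suc q) m - pair_coeff c (Suc r) q m
      = fps_X ^ (r + m) * shift_subst c ^ q * (shift_subst c - fps_X)"
    by (simp add: pair_coeff_def algebra_simps)
  also have "\<dots> = fps_X ^ (r + m) * shift_subst c ^ q * (- (fps_const c * fps_X * shift_subst c))"
    by (simp only: shift_subst_minus_X)
  finally show ?thesis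
    by (simp only: pair_coeff_def mult_minus_right power_Suc add_Suc add_Suc_right ac_simps)
qed

lemma pair_coeff_nth_eq_sum:
  "pair_coeff c r q m $ N = (\<Sum>a\<le>N. if r + a + m = N then (shift_subst c ^ q) $ a else 0)"
  using sum_atMost_if_add_eq[where q = "r + m" and M = N and N = N and F = "\<lambda>a. (shift_subst c ^ q) $ a"]
  by (simp add: pair_coeff_def fps_X_power_mult_nth add.commute add.left_commute)

context complex_vector_space
begin

definition eval_shifted :: "complex \<Rightarrow> (nat \<Rightarrow> nat \<Rightarrow> nat \<Rightarrow> 'v) \<Rightarrow> nat \<Rightarrow> 'v" where
  "eval_shifted c F N = (\<Sum>r\<le>N. \<Sum>q\<le>N. \<Sum>m\<le>N. scale (pair_coeff c r q m $ N) (F r q m))"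

lemma eval_shifted_collect:
  "(\<Sum>r\<le>N. \<Sum>a\<le>N. \<Sum>m\<le>N. if r + a + m = N then (\<Sum>q\<le>N. scale ((shift_subst c ^ q) $ a) (F r q m)) else 0)
    = eval_shifted c F N"
  unfolding eval_shifted_def
proof (rule sum.cong[OF refl])
  fix r
  have "(\<Sum>a\<le>N. \<Sum>m\<le>N. if r + a + m = N then \<Sum>q\<le>N. scale ((shift_subst c ^ q) $ a) (F r q m) else 0)
      = (\<Sum>a\<le>N. \<Sum>m\<le>N. \<Sum>q\<le>N. if r + a + m = N then scale ((shift_subst c ^ q) $ a) (F r q m) else 0)"
    by (intro sum.cong refl) simp
  also have "\<dots> = (\<Sum>m\<le>N. \<Sum>q\<le>N. \<Sum>a\<le>N. if r + a + m = N then scale ((shift_subst c ^ q) $ a) (F r q m) else 0)"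
    by (rule sum_rotate3)
  also have "\<dots> = (\<Sum>q\<le>N. \<Sum>m\<le>N. \<Sum>a\<le>N. if r + a + m = N then scale ((shift_subst c ^ q) $ a) (F r q m) else 0)"
    by (rule sum.swap)
  also have "\<dots> = (\<Sum>q\<le>N. \<Sum>m\<le>N. scale (pair_coeff c r q m $ N) (F r q m))"
    by (simp add: pair_coeff_nth_eq_sum scale_sum_left if_distrib[of "\<lambda>x. scale x _"]
        cong: if_cong)
  finally show "(\<Sum>a\<le>N. \<Sum>m\<le>N. if r + a + m = N then \<Sum>q\<le>N. scale ((shift_subst c ^ q) $ a) (F r q m) else 0)
      = (\<Sum>q\<le>N. \<Sum>m\<le>N. scale (pair_coeff c r q m $ N) (F r q m))" .
qed

lemma series_apply_shift_op:
  assumes "\<And>q. Vector_Spaces.linear scale scale (A q)"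
  shows "series_apply A (series_apply (shift_op c B) z) N = eval_shifted c (\<lambda>r q m. A r (B q (z m))) N"
proof -
  have "series_apply A (series_apply (shift_op c B) z) N
      = (\<Sum>r\<le>N. \<Sum>a\<le>N. \<Sum>m\<le>N. if r + a + m = N then A r (shift_op c B a (z m)) else 0)"
    by (rule series_apply_series_apply[OF assms])
  also have "\<dots> = (\<Sum>r\<le>N. \<Sum>a\<le>N. \<Sum>m\<le>N.
      if r + a + m = N then (\<Sum>q\<le>N. scale ((shift_subst c ^ q) $ a) (A r (B q (z m)))) else 0)"
    by (intro sum.cong refl) (simp add: shift_op_def shift_series_atMost linear_sum[OF assms]
        linear_scale[OF assms])
  finally show ?thesis
    by (simp only: eval_shifted_collect)
qed

lemma shift_op_series_apply:
  assumes "\<And>q. Vector_Spaces.linear scale scale (B q)"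
  shows "series_apply (shift_op c B) (series_apply A z) N = eval_shifted c (\<lambda>r q m. B q (A r (z m))) N"
proof -
  have "series_apply (shift_op c B) (series_apply A z) N
      = (\<Sum>a\<le>N. \<Sum>r\<le>N. \<Sum>m\<le>N. if a + r + m = N then shift_op c B a (A r (z m)) else 0)"
    by (rule series_apply_series_apply) (rule linear_shift_op[OF assms])
  also have "\<dots> = (\<Sum>r\<le>N. \<Sum>a\<le>N. \<Sum>m\<le>N. if r + a + m = N then shift_op c B a (A r (z m)) else 0)"
    by (subst sum.swap) (simp only: add.commute)
  also have "\<dots> = (\<Sum>r\<le>N. \<Sum>a\<le>N. \<Sum>m\<le>N.
      if r + a + m = N then (\<Sum>q\<le>N. scale ((shift_subst c ^ q) $ a) (B q (A r (z m)))) else 0)"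
    by (intro sum.cong refl) (simp add: shift_op_def shift_series_atMost)
  finally show ?thesis
    by (simp only: eval_shifted_collect)
qed

lemma eval_shifted_shift_first:
  assumes "\<And>r m. F r 0 m = 0"
  shows "(\<Sum>r\<le>N. \<Sum>q\<le>N. \<Sum>m\<le>N. scale (pair_coeff c r q m $ N) (F (Suc r) q m))
    = (\<Sum>r\<le>N. \<Sum>q\<le>N. \<Sum>m\<le>N. scale (if r = 0 then 0 else pair_coeff c (r - 1) q m $ N) (F r q m))"
proof -
  let ?g = "\<lambda>r. \<Sum>q\<le>N. \<Sum>m\<le>N. scale (if r = 0 then 0 else pair_coeff c (r - 1) q m $ N) (F r q m)"
  have "scale (pair_coeff c N q m $ N) (F (Suc N) q m) = 0" for q m
    by (cases "q = 0") (simp_all add: assms pair_coeff_nth_less)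
  then have "?g (Suc N) = 0"
    by (simp del: scale_eq_0_iff)
  then show ?thesis
    using sum_atMost_Suc_shift_vanishing[of ?g N] by simp
qed

lemma eval_shifted_shift_second:
  assumes "\<And>q m. F 0 q m = 0"
  shows "(\<Sum>q\<le>N. \<Sum>m\<le>N. scale (pair_coeff c r q m $ N) (F r (Suc q) m))
    = (\<Sum>q\<le>N. \<Sum>m\<le>N. scale (if q = 0 then 0 else pair_coeff c r (q - 1) m $ N) (F r q m))"
proof -
  let ?g = "\<lambda>q. \<Sum>m\<le>N. scale (if q = 0 then 0 else pair_coeff c r (q - 1) m $ N) (F r q m)"
  have "scale (pair_coeff c r N m $ N) (F r (Suc N) m) = 0" for m
    by (cases "r = 0") (simp_all add: assms pair_coeff_nth_less)
  then have "?g (Suc N) = 0"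
    by (simp del: scale_eq_0_iff)
  then show ?thesis
    using sum_atMost_Suc_shift_vanishing[of ?g N] by simp
qed

text \<open>Multiplication by \<open>u - (u + c) = - c\<close>.\<close>

lemma eval_shifted_diff:
  assumes F_0_left: "\<And>q m. F 0 q m = 0" and F_0_right: "\<And>r m. F r 0 m = 0"
  shows "eval_shifted c (\<lambda>r q m. F (Suc r) q m - F r (Suc q) m) N = scale (- c) (eval_shifted c F N)"
proof -
  let ?C = "\<lambda>r q m. pair_coeff c r q m $ N"
  have step: "scale (if r = 0 then 0 else ?C (r - 1) q m) (F r q m)
      - scale (if q = 0 then 0 else ?C r (q - 1) m) (F r q m) = scale (- c) (scale (?C r q m) (F r q m))"
    for r q m
  proof (cases "r = 0 \<or> q = 0")
    case True
    then show ?thesis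
      using F_0_left F_0_right by auto
  next
    case False
    then obtain r' q' where "r = Suc r'" and "q = Suc q'"
      by (metis not0_implies_Suc)
    then show ?thesis
      using arg_cong[OF pair_coeff_recurrence[of c r' q' m], of "\<lambda>f. f $ N"]
      by (simp add: scale_left_diff_distrib [symmetric])
  qed
  have "eval_shifted c (\<lambda>r q m. F (Suc r) q m - F r (Suc q) m) N
      = (\<Sum>r\<le>N. \<Sum>q\<le>N. \<Sum>m\<le>N. scale (?C r q m) (F (Suc r) q m))
        - (\<Sum>r\<le>N. \<Sum>q\<le>N. \<Sum>m\<le>N. scale (?C r q m) (F r (Suc q) m))"
    by (simp add: eval_shifted_def scale_right_diff_distrib sum_subtractf)
  also have "\<dots> = (\<Sum>r\<le>N. \<Sum>q\<le>N. \<Sum>m\<le>N. scale (- c) (scale (?C r q m) (F r q m)))"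
    by (simp only: eval_shifted_shift_first[of F, OF F_0_right] eval_shifted_shift_second[of F, OF F_0_left]
        step sum_subtractf[symmetric])
  finally show ?thesis
    by (simp add: eval_shifted_def scale_sum_right)
qed

end

section \<open>The defining relations\<close>

locale yangian_module =
  fixes \<kappa> :: nat and s :: "nat \<Rightarrow> int" and scale :: "complex \<Rightarrow> 'v::ab_group_add \<Rightarrow> 'v"
    and t :: "nat \<Rightarrow> nat \<Rightarrow> nat \<Rightarrow> 'v \<Rightarrow> 'v"
  assumes yangian_rep: "yangian_rep \<kappa> s scale t"
    and signs: "i \<in> {1..\<kappa>} \<Longrightarrow> s i = 1 \<or> s i = -1"
begin

sublocale complex_vector_space scale
  using yangian_rep by (simp add: yangian_rep_def complex_vector_space_def)

lemma linear_t:
  "\<lbrakk>i \<in> {1..\<kappa>}; j \<in> {1..\<kappa>}; 1 \<le> r\<rbrakk> \<Longrightarrow> Vector_Spaces.linear scale scale (t i j r)"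
  using yangian_rep by (simp add: yangian_rep_def)

lemma linear_tt: "\<lbrakk>i \<in> {1..\<kappa>}; j \<in> {1..\<kappa>}\<rbrakk> \<Longrightarrow> Vector_Spaces.linear scale scale (tt t i j q)"
  by (cases "q = 0"; cases "i = j") (simp_all add: tt_def[abs_def] linear_t linear_ident linear_zero)

lemma tt_zero [simp]: "\<lbrakk>i \<in> {1..\<kappa>}; j \<in> {1..\<kappa>}\<rbrakk> \<Longrightarrow> tt t i j q 0 = 0"
  by (rule linear_0[OF linear_tt])

abbreviation comm_sign :: "nat \<Rightarrow> nat \<Rightarrow> nat \<Rightarrow> nat \<Rightarrow> complex" where
  "comm_sign i j k l \<equiv> (-1) ^ ((par s i + par s j) * (par s k + par s l))"

abbreviation rel_sign :: "nat \<Rightarrow> nat \<Rightarrow> nat \<Rightarrow> complex" where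
  "rel_sign i j k \<equiv> (-1) ^ (par s i * par s j + par s i * par s k + par s j * par s k)"

definition supercommutator :: "nat \<Rightarrow> nat \<Rightarrow> nat \<Rightarrow> nat \<Rightarrow> nat \<Rightarrow> nat \<Rightarrow> 'v \<Rightarrow> 'v" where
  "supercommutator i j k l r q x
    = tt t i j r (tt t k l q x) - scale (comm_sign i j k l) (tt t k l q (tt t i j r x))"

definition exchange_term :: "nat \<Rightarrow> nat \<Rightarrow> nat \<Rightarrow> nat \<Rightarrow> nat \<Rightarrow> nat \<Rightarrow> 'v \<Rightarrow> 'v" where
  "exchange_term i j k l e f x = tt t k j e (tt t i l f x) - tt t k j f (tt t i l e x)"

context
  fixes i j k l assumes ijkl: "i \<in> {1..\<kappa>}" "j \<in> {1..\<kappa>}" "k \<in> {1..\<kappa>}" "l \<in> {1..\<kappa>}"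
begin

lemma supercommutator_eq:
  "supercommutator i j k l r q x
    = scale (rel_sign i j k) (\<Sum>e<min r q. exchange_term i j k l e (r + q - 1 - e) x)"
proof (cases "r = 0 \<or> q = 0")
  case True
  then show ?thesis
    using ijkl by (auto simp: supercommutator_def tt_def[of t _ _ 0])
next
  case False
  then have "tt t i j r = t i j r" and "tt t k l q = t k l q"
    by (auto simp: tt_def[abs_def])
  moreover have "sgnv e x = scale ((-1) ^ e) x" for e and x :: 'v
    by (simp add: sgnv_def minus_one_power_iff)
  ultimately show ?thesis
    using yangian_rep ijkl False
    by (simp add: yangian_rep_def supercommutator_def exchange_term_def sum_subtractf)
qed

text \<open>Coefficient form of \<open>(u - v) [t_ij(u), t_kl(v)] = \<sigma> (t_kj(u) t_il(v) - t_kj(v) t_il(u))\<close>.\<close>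

lemma supercommutator_recurrence:
  "supercommutator i j k l (Suc r) q x - supercommutator i j k l r (Suc q) x
    = scale (rel_sign i j k) (exchange_term i j k l r q x)"
proof -
  have "(\<Sum>e<min (Suc r) q. exchange_term i j k l e (r + q - e) x)
      - (\<Sum>e<min r (Suc q). exchange_term i j k l e (r + q - e) x) = exchange_term i j k l r q x"
    by (rule sum_lessThan_min_Suc_diff) (simp_all add: exchange_term_def)
  then show ?thesis
    by (simp add: supercommutator_eq scale_right_diff_distrib[symmetric])
qed

lemma supercommutator_0_left: "supercommutator i j k l 0 q x = 0"
  by (simp add: supercommutator_eq)

lemma supercommutator_0_right: "supercommutator i j k l r 0 x = 0"
  by (simp add: supercommutator_eq)

text \<open>The same relation at \<open>v = u + c\<close>.\<close>

lemma shifted_relation: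
  "scale (- c) (series_apply (tt t i j) (series_apply (shift_op c (tt t k l)) z) N
      - scale (comm_sign i j k l) (series_apply (shift_op c (tt t k l)) (series_apply (tt t i j) z) N))
    = scale (rel_sign i j k) (series_apply (tt t k j) (series_apply (shift_op c (tt t i l)) z) N
      - series_apply (shift_op c (tt t k j)) (series_apply (tt t i l) z) N)"
proof -
  have "series_apply (tt t i j) (series_apply (shift_op c (tt t k l)) z) N
      - scale (comm_sign i j k l) (series_apply (shift_op c (tt t k l)) (series_apply (tt t i j) z) N)
      = eval_shifted c (\<lambda>r q m. supercommutator i j k l r q (z m)) N"
    using ijkl
    by (simp add: series_apply_shift_op shift_op_series_apply linear_tt eval_shifted_def
        supercommutator_def scale_sum_right scale_right_diff_distrib scale_left_commute
        sum_subtractf[symmetric] mult.commute)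
  moreover have "scale (rel_sign i j k) (series_apply (tt t k j) (series_apply (shift_op c (tt t i l)) z) N
      - series_apply (shift_op c (tt t k j)) (series_apply (tt t i l) z) N)
      = eval_shifted c (\<lambda>r q m. supercommutator i j k l (Suc r) q (z m)
          - supercommutator i j k l r (Suc q) (z m)) N"
    using ijkl
    by (simp add: series_apply_shift_op shift_op_series_apply linear_tt eval_shifted_def
        supercommutator_recurrence exchange_term_def scale_sum_right scale_right_diff_distrib
        scale_left_commute sum_subtractf[symmetric] mult.commute)
  moreover have "eval_shifted c (\<lambda>r q m. supercommutator i j k l (Suc r) q (z m)
      - supercommutator i j k l r (Suc q) (z m)) N
      = scale (- c) (eval_shifted c (\<lambda>r q m. supercommutator i j k l r q (z m)) N)"
    by (rule eval_shifted_diff) (simp_all add: supercommutator_0_left supercommutator_0_right)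
  ultimately show ?thesis
    by simp
qed

end

text \<open>Since \<open>(-1)^|n| = s n\<close>, for \<open>c = s n\<close> the sign of the relation cancels against \<open>u - v = - c\<close>.\<close>

lemma shifted_commute_row:
  assumes n: "n \<in> {1..\<kappa>}" and b: "b \<in> {1..\<kappa>}" and c: "c = of_int (s n)"
  shows "series_apply (tt t n b) (series_apply (shift_op c (tt t n n)) z) N
    = series_apply (tt t n n) (series_apply (shift_op c (tt t n b)) z) N"
proof -
  let ?Q1 = "series_apply (tt t n b) (series_apply (shift_op c (tt t n n)) z) N"
  let ?Q2 = "series_apply (shift_op c (tt t n n)) (series_apply (tt t n b) z) N"
  let ?Q3 = "series_apply (shift_op c (tt t n b)) (series_apply (tt t n n) z) N"
  let ?Q4 = "series_apply (tt t n n) (series_apply (shift_op c (tt t n b)) z) N"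
  have c0: "c \<noteq> 0"
    using signs[OF n] c by auto
  have "- (?Q1 - ?Q2) = ?Q1 - ?Q3"
    using shifted_relation[OF n b n n, of c z N] signs[OF n]
    by (intro scale_minus_cancel[OF c0]) (auto simp: c par_def)
  moreover have "- (?Q4 - ?Q3) = ?Q4 - ?Q2"
    using shifted_relation[OF n n n b, of c z N] signs[OF n]
    by (intro scale_minus_cancel[OF c0]) (auto simp: c par_def)
  ultimately have "scale 2 ?Q1 = scale 2 ?Q4"
    by (simp add: scale_left_distrib[of 1 1, simplified] algebra_simps)
  then show ?thesis
    by (rule scale_left_imp_eq[rotated]) simp
qed

definition annihilated :: "nat \<Rightarrow> nat \<Rightarrow> 'v set" where
  "annihilated p n = {x. \<forall>a\<in>{1..p}. \<forall>r\<ge>1. t a n r x = 0}"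

context
  fixes p n assumes p_less: "p < n" and n: "n \<in> {1..\<kappa>}"
begin

private lemma upper_index: "a \<in> {1..p} \<Longrightarrow> a \<in> {1..\<kappa>}"
  using p_less n by auto

lemma subspace_annihilated: "subspace (annihilated p n)"
  using linear_0[OF linear_t] linear_add[OF linear_t] linear_scale[OF linear_t] upper_index n
  by (auto simp: subspace_def annihilated_def)

lemma tt_annihilated: "a \<in> {1..p} \<Longrightarrow> x \<in> annihilated p n \<Longrightarrow> tt t a n q x = 0"
  using p_less by (auto simp: annihilated_def tt_def)

lemma series_apply_annihilated:
  "a \<in> {1..p} \<Longrightarrow> (\<And>N. z N \<in> annihilated p n) \<Longrightarrow> series_apply (tt t a n) z = (\<lambda>N. 0)"
  by (simp add: fun_eq_iff series_apply_def tt_annihilated)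

lemma shift_op_series_apply_annihilated:
  "a \<in> {1..p} \<Longrightarrow> (\<And>N. z N \<in> annihilated p n) \<Longrightarrow> series_apply (shift_op c (tt t a n)) z = (\<lambda>N. 0)"
  by (simp add: fun_eq_iff series_apply_def shift_op_def shift_series_def tt_annihilated)

lemma shift_series_annihilated:
  "(\<And>N. y N \<in> annihilated p n) \<Longrightarrow> shift_series c y N \<in> annihilated p n"
  unfolding shift_series_def by (intro subspace_sum subspace_scale subspace_annihilated)

text \<open>In the relation for \<open>[t_cd(u), t_an(v)]\<close> every term on the right applies some \<open>t_cn\<close> first,
  which kills \<open>x\<close>.\<close>

lemma t_annihilated:
  assumes c: "c \<in> {1..p}" and d: "d \<in> {1..p}" and q: "1 \<le> q" and x: "x \<in> annihilated p n"
  shows "t c d q x \<in> annihilated p n"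
  unfolding annihilated_def
proof (intro CollectI ballI allI impI)
  fix a and r :: nat
  assume a: "a \<in> {1..p}" and r: "1 \<le> r"
  have "supercommutator c d a n q r x = 0"
    using supercommutator_eq[OF upper_index[OF c] upper_index[OF d] upper_index[OF a] n]
      upper_index[OF a] upper_index[OF d]
    by (simp add: exchange_term_def tt_annihilated[OF c x])
  moreover have "tt t a n r x = 0"
    using tt_annihilated[OF a x] .
  ultimately show "t a n r (t c d q x) = 0"
    using q r linear_0[OF linear_t[OF upper_index[OF c] upper_index[OF d] q]]
    by (simp add: supercommutator_def tt_def)
qed

lemma shifted_relation_annihilated:
  assumes a: "a \<in> {1..p}" and b: "b \<in> {1..\<kappa>}" and c: "c = of_int (s n)"
    and z: "\<And>N. z N \<in> annihilated p n"
  shows "series_apply (tt t a b) (series_apply (shift_op c (tt t n n)) z) N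
      - series_apply (tt t a n) (series_apply (shift_op c (tt t n b)) z) N
    = series_apply (tt t n n) (series_apply (shift_op c (tt t a b)) z) N"
proof -
  let ?P = "series_apply (shift_op c (tt t n n)) (series_apply (tt t a b) z) N"
  have c0: "c \<noteq> 0"
    using signs[OF n] c by auto
  have vanish: "series_apply (tt t n b) (series_apply (shift_op c (tt t a n)) z) N = 0"
    "series_apply (shift_op c (tt t n b)) (series_apply (tt t a n) z) N = 0"
    using n b by (simp_all add: shift_op_series_apply_annihilated[OF a z] series_apply_annihilated[OF a z]
        series_apply_zero linear_tt linear_shift_op)
  have "series_apply (tt t a b) (series_apply (shift_op c (tt t n n)) z) N = ?P"
    using shifted_relation[OF upper_index[OF a] b n n, of c z N] c0 by (simp add: vanish)
  moreover have "- series_apply (tt t a n) (series_apply (shift_op c (tt t n b)) z) N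
      = series_apply (tt t n n) (series_apply (shift_op c (tt t a b)) z) N - ?P"
  proof -
    have "rel_sign a n n = c"
      using signs[OF n] by (auto simp: c par_def)
    then show ?thesis
      using shifted_relation[OF upper_index[OF a] n n b, of c z N]
      by (intro scale_minus_cancel[OF c0]) (simp add: vanish)
  qed
  ultimately show ?thesis
    by (simp add: algebra_simps)
qed

end

section \<open>Columns of the inverse of \<open>T(u)\<close>\<close>

text \<open>\<open>y\<close> is the \<open>i\<close>-th column of the inverse of the leading \<open>p \<times> p\<close> block of \<open>T(u)\<close>, applied to \<open>x\<close>.\<close>

definition solves_column :: "nat \<Rightarrow> nat \<Rightarrow> 'v \<Rightarrow> (nat \<Rightarrow> nat \<Rightarrow> 'v) \<Rightarrow> bool" where
  "solves_column p i x y \<longleftrightarrow> (\<forall>a\<in>{1..p}. \<forall>N.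
     (\<Sum>b\<in>{1..p}. series_apply (tt t a b) (y b) N) = const_series (if a = i then x else 0) N)"

lemma sum_series_apply_tt:
  assumes "a \<in> {1..p}"
  shows "(\<Sum>b\<in>{1..p}. series_apply (tt t a b) (y b) N)
    = y a N + (\<Sum>b\<in>{1..p}. \<Sum>q\<in>{1..N}. t a b q (y b (N - q)))"
proof -
  have "series_apply (tt t a b) (y b) N = tt t a b 0 (y b N) + (\<Sum>q\<in>{1..N}. t a b q (y b (N - q)))" for b
  proof -
    have "{..N} = insert 0 {1..N}"
      by auto
    then show ?thesis
      by (simp add: series_apply_def tt_def)
  qed
  then show ?thesis
    using assms by (simp add: sum.distrib tt_def)
qed

lemma solves_column_unique:
  assumes "solves_column p i x y" and "solves_column p i x w" and "a \<in> {1..p}"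
  shows "y a N = w a N"
  using assms(3)
proof (induction N arbitrary: a rule: less_induct)
  case (less N)
  have "(\<Sum>b\<in>{1..p}. \<Sum>q\<in>{1..N}. t a b q (y b (N - q))) = (\<Sum>b\<in>{1..p}. \<Sum>q\<in>{1..N}. t a b q (w b (N - q)))"
    by (intro sum.cong refl) (simp add: less.IH)
  moreover have "y a N + (\<Sum>b\<in>{1..p}. \<Sum>q\<in>{1..N}. t a b q (y b (N - q)))
      = w a N + (\<Sum>b\<in>{1..p}. \<Sum>q\<in>{1..N}. t a b q (w b (N - q)))"
    using assms(1,2) less.prems
    unfolding solves_column_def sum_series_apply_tt[OF less.prems, symmetric] by simp
  ultimately show ?case
    by simp
qed

lemma solves_column_tinv: "solves_column p i x (\<lambda>b N. tinv p t b i N x)"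
  unfolding solves_column_def
proof (intro ballI allI)
  fix a N assume a: "a \<in> {1..p}"
  show "(\<Sum>b\<in>{1..p}. series_apply (tt t a b) (\<lambda>N. tinv p t b i N x) N) = const_series (if a = i then x else 0) N"
  proof (cases N)
    case 0
    then show ?thesis
      unfolding sum_series_apply_tt[OF a] by (simp add: const_series_def)
  next
    case (Suc r)
    have "tinv p t a i N x = - (\<Sum>b\<in>{1..p}. \<Sum>q\<in>{1..N}. t a b q (tinv p t b i (N - q) x))"
      unfolding Suc by (simp only: tinv.simps)
    then show ?thesis
      unfolding sum_series_apply_tt[OF a] using Suc by (simp add: const_series_def)
  qed
qed

lemma solves_column_shift:
  assumes "solves_column p i x y" and "a \<in> {1..p}" and "p \<le> \<kappa>"
  shows "(\<lambda>N. \<Sum>b\<in>{1..p}. series_apply (shift_op c (tt t a b)) (shift_series c (y b)) N)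
    = const_series (if a = i then x else 0)"
proof -
  have "(\<lambda>N. \<Sum>b\<in>{1..p}. series_apply (shift_op c (tt t a b)) (shift_series c (y b)) N)
      = shift_series c (\<lambda>N. \<Sum>b\<in>{1..p}. series_apply (tt t a b) (y b) N)"
    using assms(2,3) by (simp add: fun_eq_iff shift_series_sum shift_series_series_apply linear_tt)
  then show ?thesis
    using assms(1,2) by (simp add: fun_eq_iff solves_column_def shift_series_const_series)
qed

lemma tinv_annihilated:
  assumes "p < n" and "n \<in> {1..\<kappa>}" and "x \<in> annihilated p n" and "b \<in> {1..p}"
  shows "tinv p t b i N x \<in> annihilated p n"
  using assms(4)
proof (induction N arbitrary: b rule: less_induct)
  case (less N)
  show ?case
  proof (cases N)
    case 0
    then show ?thesis
      using assms subspace_0[OF subspace_annihilated] by simp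
  next
    case (Suc r)
    have "tinv p t b i N x = - (\<Sum>j\<in>{1..p}. \<Sum>q\<in>{1..N}. t b j q (tinv p t j i (N - q) x))"
      unfolding Suc by (simp only: tinv.simps)
    moreover have "\<dots> \<in> annihilated p n"
      using assms(1,2) less Suc
      by (intro subspace_neg subspace_sum t_annihilated subspace_annihilated) auto
    ultimately show ?thesis
      by simp
  qed
qed

end

section \<open>Highest weight vectors\<close>

lemma rho_Suc: "k \<le> Suc p \<Longrightarrow> rho (Suc p) s k = rho p s k + s (Suc p)"
  by (simp add: rho_def)

lemma rho_Suc_self: "rho p s (Suc p) = 0"
  by (simp add: rho_def)

definition weight_factor :: "(nat \<Rightarrow> int) \<Rightarrow> (nat \<Rightarrow> complex fps) \<Rightarrow> nat \<Rightarrow> nat \<Rightarrow> complex fps" where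
  "weight_factor s lam p k = fps_shift_arg (of_int (rho p s k)) (lam k)
     * inverse (fps_shift_arg (of_int (rho p s (k + 1))) (lam k))"

definition diag_weight :: "(nat \<Rightarrow> int) \<Rightarrow> (nat \<Rightarrow> complex fps) \<Rightarrow> nat \<Rightarrow> nat \<Rightarrow> complex fps" where
  "diag_weight s lam i p = inverse (fps_shift_arg (of_int (rho p s (i + 1))) (lam i))
     * (\<Prod>k\<in>{i+1..p}. weight_factor s lam p k)"

lemma diag_weight_self: "diag_weight s lam i i = inverse (lam i)"
  by (simp add: diag_weight_def rho_Suc_self fps_shift_arg_zero)

lemma fps_shift_arg_weight_factor:
  assumes "k \<le> p" and "lam k $ 0 \<noteq> 0"
  shows "fps_shift_arg (of_int (s (Suc p))) (weight_factor s lam p k) = weight_factor s lam (Suc p) k"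
  using assms by (simp add: weight_factor_def fps_shift_arg_mult fps_shift_arg_inverse
      fps_shift_arg_shift_arg rho_Suc add.commute)

lemma weight_factor_Suc_self:
  "weight_factor s lam (Suc p) (Suc p) = fps_shift_arg (of_int (s (Suc p))) (lam (Suc p)) * inverse (lam (Suc p))"
  by (simp add: weight_factor_def rho_def fps_shift_arg_zero)

lemma diag_weight_Suc:
  assumes "i \<le> p" and lam_0: "\<And>k. k \<in> {i..Suc p} \<Longrightarrow> lam k $ 0 = 1"
  shows "diag_weight s lam i (Suc p) = inverse (lam (Suc p)) * (fps_shift_arg (of_int (s (Suc p)))
    (diag_weight s lam i p) * fps_shift_arg (of_int (s (Suc p))) (lam (Suc p)))"
proof -
  let ?c = "of_int (s (Suc p)) :: complex"
  have "fps_shift_arg ?c (\<Prod>k\<in>{i+1..p}. weight_factor s lam p k) = (\<Prod>k\<in>{i+1..p}. weight_factor s lam (Suc p) k)"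
    using lam_0 by (simp add: fps_shift_arg_prod fps_shift_arg_weight_factor)
  moreover have "fps_shift_arg ?c (inverse (fps_shift_arg (of_int (rho p s (i + 1))) (lam i)))
      = inverse (fps_shift_arg (of_int (rho (Suc p) s (i + 1))) (lam i))"
    using assms by (simp add: fps_shift_arg_inverse fps_shift_arg_shift_arg rho_Suc add.commute)
  moreover have "{i+1..Suc p} = insert (Suc p) {i+1..p}"
    using assms(1) by auto
  ultimately show ?thesis
    using assms(1) by (simp add: diag_weight_def fps_shift_arg_mult weight_factor_Suc_self ac_simps)
qed

locale highest_weight_module = yangian_module \<kappa> s scale t
  for \<kappa> s and scale :: "complex \<Rightarrow> 'v::ab_group_add \<Rightarrow> 'v" and t +
  fixes lam :: "nat \<Rightarrow> complex fps" and xi :: 'v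
  assumes highest_weight: "highest_weight_vector \<kappa> scale t lam xi"
begin

lemma lam_nth_0: "i \<in> {1..\<kappa>} \<Longrightarrow> lam i $ 0 = 1"
  using highest_weight by (simp add: highest_weight_vector_def)

lemma t_upper_xi: "\<lbrakk>i \<in> {1..\<kappa>}; j \<in> {1..\<kappa>}; i < j; 1 \<le> r\<rbrakk> \<Longrightarrow> t i j r xi = 0"
  using highest_weight by (simp add: highest_weight_vector_def)

lemma series_apply_diag_xi:
  assumes "i \<in> {1..\<kappa>}"
  shows "series_apply (tt t i i) (const_series xi) = series_apply (scalar_op (lam i)) (const_series xi)"
  using highest_weight assms lam_nth_0[OF assms]
  by (auto simp: fun_eq_iff series_apply_const_series series_apply_scalar_op_const_series linear_tt
      tt_def highest_weight_vector_def)

lemma xi_annihilated: "\<lbrakk>p < n; n \<in> {1..\<kappa>}\<rbrakk> \<Longrightarrow> xi \<in> annihilated p n"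
  by (auto simp: annihilated_def intro: t_upper_xi)

lemma inverse_lam_mult: "i \<in> {1..\<kappa>} \<Longrightarrow> inverse (lam i) * lam i = 1"
  by (simp add: inverse_mult_eq_1 lam_nth_0)

lemma series_apply_inverse_lam_diag:
  assumes "n \<in> {1..\<kappa>}"
  shows "series_apply (scalar_op (inverse (lam n))) (series_apply (tt t n n) (const_series (if P then xi else 0))) N
    = const_series (if P then xi else 0) N"
proof (cases P)
  case True
  then show ?thesis
    using assms by (simp add: series_apply_diag_xi series_apply_scalar_op_mult inverse_lam_mult
        series_apply_scalar_op_one)
next
  case False
  then show ?thesis
    using assms by (simp add: series_apply_zero linear_tt linear_scalar_op)
qed

lemma tinv_diag_base:
  assumes i: "i \<in> {1..\<kappa>}"
  shows "tinv i t i i N xi = scale (inverse (lam i) $ N) xi"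
proof -
  let ?\<mu> = "scalar_op (inverse (lam i))"
  let ?y = "\<lambda>b. if b = i then series_apply ?\<mu> (const_series xi) else (\<lambda>N. 0)"
  have "solves_column i i xi ?y"
    unfolding solves_column_def
  proof (intro ballI allI)
    fix a N assume a: "a \<in> {1..i}"
    then have a': "a \<in> {1..\<kappa>}"
      using i by auto
    have "series_apply (tt t a i) (const_series xi) = series_apply (tt t i i) (const_series (if a = i then xi else 0))"
    proof (cases "a = i")
      case False
      have "series_apply (tt t i i) (const_series 0) = (\<lambda>N. 0)"
        using i by (simp add: series_apply_zero linear_tt)
      moreover have "series_apply (tt t a i) (const_series xi) = (\<lambda>N. 0)"
        using False a a' i by (auto simp: fun_eq_iff series_apply_const_series linear_tt tt_def t_upper_xi)
      ultimately show ?thesis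
        using False by simp
    qed simp
    then have "(\<Sum>b\<in>{1..i}. series_apply (tt t a b) (?y b) N)
        = series_apply ?\<mu> (series_apply (tt t i i) (const_series (if a = i then xi else 0))) N"
      using i a' by (simp add: if_distrib[of "\<lambda>y. series_apply _ y _"] series_apply_zero linear_tt
          series_apply_scalar_op_commute cong: if_cong)
    then show "(\<Sum>b\<in>{1..i}. series_apply (tt t a b) (?y b) N) = const_series (if a = i then xi else 0) N"
      by (simp add: series_apply_inverse_lam_diag[OF i])
  qed
  then show ?thesis
    using solves_column_unique[OF solves_column_tinv, of i i xi ?y i N] i
    by (simp add: series_apply_scalar_op_const_series)
qed

definition extend_column :: "complex \<Rightarrow> nat \<Rightarrow> (nat \<Rightarrow> nat \<Rightarrow> 'v) \<Rightarrow> nat \<Rightarrow> nat \<Rightarrow> 'v" where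
  "extend_column c p y b = series_apply (scalar_op (inverse (lam (Suc p))))
     (if b \<le> p then series_apply (shift_op c (tt t (Suc p) (Suc p))) (shift_series c (y b))
      else (\<lambda>N. - (\<Sum>b'\<in>{1..p}. series_apply (shift_op c (tt t (Suc p) b')) (shift_series c (y b')) N)))"

lemma sum_series_apply_extend_column:
  assumes a: "a \<in> {1..Suc p}" and n: "Suc p \<le> \<kappa>"
  shows "(\<Sum>b\<in>{1..Suc p}. series_apply (tt t a b) (extend_column c p y b) N)
    = series_apply (scalar_op (inverse (lam (Suc p)))) (\<lambda>N. \<Sum>b\<in>{1..p}.
        series_apply (tt t a b) (series_apply (shift_op c (tt t (Suc p) (Suc p))) (shift_series c (y b))) N
        - series_apply (tt t a (Suc p)) (series_apply (shift_op c (tt t (Suc p) b)) (shift_series c (y b))) N) N"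
proof -
  let ?\<mu> = "scalar_op (inverse (lam (Suc p)))"
  let ?D = "\<lambda>b. series_apply (shift_op c (tt t (Suc p) (Suc p))) (shift_series c (y b))"
  let ?E = "\<lambda>b. series_apply (shift_op c (tt t (Suc p) b)) (shift_series c (y b))"
  have a': "a \<in> {1..\<kappa>}" and n': "Suc p \<in> {1..\<kappa>}"
    using a n by auto
  have upper: "series_apply (tt t a b) (extend_column c p y b) N
      = series_apply ?\<mu> (series_apply (tt t a b) (?D b)) N" if "b \<in> {1..p}" for b N
    using that n a' by (simp add: extend_column_def series_apply_scalar_op_commute linear_tt)
  have "series_apply (tt t a (Suc p)) (\<lambda>N. - (\<Sum>b\<in>{1..p}. ?E b N))
      = (\<lambda>N. - (\<Sum>b\<in>{1..p}. series_apply (tt t a (Suc p)) (?E b) N))"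
    using a' n' by (simp add: fun_eq_iff series_apply_neg series_apply_sum linear_tt)
  then have last: "series_apply (tt t a (Suc p)) (extend_column c p y (Suc p)) N
      = series_apply ?\<mu> (\<lambda>N. - (\<Sum>b\<in>{1..p}. series_apply (tt t a (Suc p)) (?E b) N)) N"
    using a' n' by (simp add: extend_column_def series_apply_scalar_op_commute linear_tt)
  have "{1..Suc p} = insert (Suc p) {1..p}"
    by auto
  then have "(\<Sum>b\<in>{1..Suc p}. series_apply (tt t a b) (extend_column c p y b) N)
      = series_apply ?\<mu> (\<lambda>N. - (\<Sum>b\<in>{1..p}. series_apply (tt t a (Suc p)) (?E b) N)) N
        + (\<Sum>b\<in>{1..p}. series_apply ?\<mu> (series_apply (tt t a b) (?D b)) N)"
    by (simp add: last upper)
  also have "\<dots> = series_apply ?\<mu> (\<lambda>N. - (\<Sum>b\<in>{1..p}. series_apply (tt t a (Suc p)) (?E b) N)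
      + (\<Sum>b\<in>{1..p}. series_apply (tt t a b) (?D b) N)) N"
    by (simp only: series_apply_add series_apply_sum linear_scalar_op)
  also have "(\<lambda>N. - (\<Sum>b\<in>{1..p}. series_apply (tt t a (Suc p)) (?E b) N)
      + (\<Sum>b\<in>{1..p}. series_apply (tt t a b) (?D b) N))
      = (\<lambda>N. \<Sum>b\<in>{1..p}. series_apply (tt t a b) (?D b) N - series_apply (tt t a (Suc p)) (?E b) N)"
    by (simp add: fun_eq_iff sum_subtractf)
  finally show ?thesis .
qed

lemma solves_column_extend_column:
  assumes i: "i \<in> {1..p}" and n: "Suc p \<le> \<kappa>" and c: "c = of_int (s (Suc p))"
    and y: "solves_column p i xi y" and y_annihilated: "\<And>b N. b \<in> {1..p} \<Longrightarrow> y b N \<in> annihilated p (Suc p)"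
  shows "solves_column (Suc p) i xi (extend_column c p y)"
  unfolding solves_column_def
proof (intro ballI allI)
  fix a N assume a: "a \<in> {1..Suc p}"
  have n': "Suc p \<in> {1..\<kappa>}" and upper: "\<And>b. b \<in> {1..p} \<Longrightarrow> b \<in> {1..\<kappa>}"
    using n by auto
  let ?z = "\<lambda>b. shift_series c (y b)"
  let ?bracket = "\<lambda>N. \<Sum>b\<in>{1..p}.
        series_apply (tt t a b) (series_apply (shift_op c (tt t (Suc p) (Suc p))) (?z b)) N
        - series_apply (tt t a (Suc p)) (series_apply (shift_op c (tt t (Suc p) b)) (?z b)) N"
  show "(\<Sum>b\<in>{1..Suc p}. series_apply (tt t a b) (extend_column c p y b) N)
      = const_series (if a = i then xi else 0) N"
  proof (cases "a = Suc p")
    case True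
    then have "?bracket = (\<lambda>N. 0)"
      using shifted_commute_row[OF n' upper c] by (simp add: fun_eq_iff)
    then show ?thesis
      using True i sum_series_apply_extend_column[OF a n, of c y N]
      by (simp add: series_apply_zero linear_scalar_op const_series_def)
  next
    case False
    then have a': "a \<in> {1..p}"
      using a by auto
    have z_annihilated: "?z b N \<in> annihilated p (Suc p)" if "b \<in> {1..p}" for b N
      using y_annihilated[OF that] n' by (intro shift_series_annihilated) auto
    have "?bracket = (\<lambda>N. \<Sum>b\<in>{1..p}. series_apply (tt t (Suc p) (Suc p))
        (series_apply (shift_op c (tt t a b)) (?z b)) N)"
      using shifted_relation_annihilated[OF _ n' a' upper c z_annihilated] by (simp add: fun_eq_iff)
    also have "\<dots> = series_apply (tt t (Suc p) (Suc p))
        (\<lambda>N. \<Sum>b\<in>{1..p}. series_apply (shift_op c (tt t a b)) (?z b) N)"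
      using n' by (simp add: fun_eq_iff series_apply_sum linear_tt)
    also have "(\<lambda>N. \<Sum>b\<in>{1..p}. series_apply (shift_op c (tt t a b)) (?z b) N)
        = const_series (if a = i then xi else 0)"
      using y a' n by (intro solves_column_shift) auto
    finally have "?bracket = series_apply (tt t (Suc p) (Suc p)) (const_series (if a = i then xi else 0))" .
    then show ?thesis
      using sum_series_apply_extend_column[OF a n, of c y N] series_apply_inverse_lam_diag[OF n']
      by simp
  qed
qed

lemma extend_column_diag:
  assumes n: "Suc p \<le> \<kappa>" and i: "i \<le> p" and y_i: "y i = series_apply (scalar_op L) (const_series xi)"
  shows "extend_column c p y i N
    = scale ((inverse (lam (Suc p)) * (fps_shift_arg c L * fps_shift_arg c (lam (Suc p)))) $ N) xi"
proof -
  let ?T = "tt t (Suc p) (Suc p)"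
  have n': "Suc p \<in> {1..\<kappa>}"
    using n by auto
  have shift_const: "shift_series c (const_series xi) = const_series xi"
    by (simp add: fun_eq_iff shift_series_const_series)
  have "series_apply (shift_op c ?T) (const_series xi) = shift_series c (series_apply ?T (const_series xi))"
    using n' by (simp add: fun_eq_iff shift_series_series_apply linear_tt shift_const)
  also have "series_apply ?T (const_series xi) = series_apply (scalar_op (lam (Suc p))) (const_series xi)"
    using n' by (rule series_apply_diag_xi)
  finally have T_xi: "series_apply (shift_op c ?T) (const_series xi)
      = series_apply (scalar_op (fps_shift_arg c (lam (Suc p)))) (const_series xi)"
    by (simp add: fun_eq_iff shift_series_scalar_op shift_const)
  have z_i: "shift_series c (y i) = series_apply (scalar_op (fps_shift_arg c L)) (const_series xi)"
    by (simp add: fun_eq_iff y_i shift_series_scalar_op shift_const)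
  have "series_apply (shift_op c ?T) (shift_series c (y i))
      = series_apply (scalar_op (fps_shift_arg c L)) (series_apply (shift_op c ?T) (const_series xi))"
    using n' by (simp add: z_i fun_eq_iff series_apply_scalar_op_commute linear_shift_op linear_tt)
  then show ?thesis
    using i by (simp add: extend_column_def T_xi series_apply_scalar_op_mult
        series_apply_scalar_op_const_series mult.assoc)
qed

lemma tinv_diag_Suc:
  assumes i: "i \<in> {1..p}" and n: "Suc p \<le> \<kappa>"
    and IH: "\<And>N. tinv p t i i N xi = scale (L $ N) xi"
  shows "tinv (Suc p) t i i N xi = scale ((inverse (lam (Suc p))
    * (fps_shift_arg (of_int (s (Suc p))) L * fps_shift_arg (of_int (s (Suc p))) (lam (Suc p)))) $ N) xi"
proof -
  let ?y = "\<lambda>b N. tinv p t b i N xi"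
  have "solves_column (Suc p) i xi (extend_column (of_int (s (Suc p))) p ?y)"
    using i n by (intro solves_column_extend_column solves_column_tinv tinv_annihilated xi_annihilated) auto
  then have "tinv (Suc p) t i i N xi = extend_column (of_int (s (Suc p))) p ?y i N"
    using solves_column_unique[OF solves_column_tinv] i by auto
  also have "\<dots> = scale ((inverse (lam (Suc p))
    * (fps_shift_arg (of_int (s (Suc p))) L * fps_shift_arg (of_int (s (Suc p))) (lam (Suc p)))) $ N) xi"
    using i n by (intro extend_column_diag) (simp_all add: fun_eq_iff IH series_apply_scalar_op_const_series)
  finally show ?thesis .
qed

lemma tinv_diag:
  assumes "1 \<le> i" and "i \<le> p" and "p \<le> \<kappa>"
  shows "tinv p t i i N xi = scale (diag_weight s lam i p $ N) xi"
  using assms(2,3)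
proof (induction p arbitrary: N rule: dec_induct)
  case base
  then show ?case
    using tinv_diag_base[of i N] assms(1) by (simp add: diag_weight_self)
next
  case (step q)
  have lam_0: "lam k $ 0 = 1" if "k \<in> {i..Suc q}" for k
    using that step.prems assms(1) by (intro lam_nth_0) auto
  have "diag_weight s lam i (Suc q) = inverse (lam (Suc q)) * (fps_shift_arg (of_int (s (Suc q)))
      (diag_weight s lam i q) * fps_shift_arg (of_int (s (Suc q))) (lam (Suc q)))"
    by (rule diag_weight_Suc[OF step.hyps(1) lam_0])
  then show ?case
    using tinv_diag_Suc[of i q "diag_weight s lam i q" N] step assms(1) by simp
qed

end

theorem proposition2p9:
  fixes m n :: nat and s :: "nat \<Rightarrow> int"
    and scale :: "complex \<Rightarrow> 'v::ab_group_add \<Rightarrow> 'v"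
    and t :: "nat \<Rightarrow> nat \<Rightarrow> nat \<Rightarrow> 'v \<Rightarrow> 'v"
    and lam :: "nat \<Rightarrow> complex fps" and xi :: 'v
  assumes "parity_seq m n s"
    and "yangian_rep (m + n) s scale t"
    and "highest_weight_vector (m + n) scale t lam xi"
    and "i \<in> {1..m + n}"
  shows "\<forall>r. tinv (m + n) t i i r xi =
           scale (fps_nth
             (inverse (fps_shift_arg (of_int (rho (m + n) s (i + 1))) (lam i)) *
              (\<Prod>k\<in>{i+1..m + n}.
                 fps_shift_arg (of_int (rho (m + n) s k)) (lam k) *
                 inverse (fps_shift_arg (of_int (rho (m + n) s (k + 1))) (lam k)))) r) xi"
proof -
  interpret highest_weight_module "m + n" s scale t lam xi
    using assms(1-3) by unfold_locales (auto simp: parity_seq_def)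
  show ?thesis
    using tinv_diag[of i "m + n"] assms(4) by (simp add: diag_weight_def weight_factor_def)
qed

end
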